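(* Let $G$ be a finite simple graph with at least two vertices and maximum degree $k$, regarded as a slim Hoffman graph. Then $G$ is $(-k)$-reducible.
   Context: A Hoffman graph $\mathfrak{H}$ is a finite simple graph $H$ together with a labeling of each vertex as slim or fat, such that every fat vertex is adjacent to at least one slim vertex and the fat vertices are pairwise non-adjacent. $V^s(\mathfrak{H})$, $V^f(\mathfrak{H})$ denote the sets of slim and fat vertices; for a vertex $x$, $N^f_{\mathfrak{H}}(x)$ denotes the set of fat neighbours of $x$. $\mathfrak{H}$ is slim if it has no fat vertices; an ordinary graph is identified with a slim Hoffman graph. An induced Hoffman subgraph of $\mathfrak{H}$ is a Hoffman graph whose underlying graph is an induced subgraph of $H$, with the inherited labels. Writing the adjacency matrix of $H$ with fat vertices last as $\begin{pmatrix}A_s & C\\ C^T & O\end{pmatrix}$, set $B(\mathfrak{H})=A_s-CC^T$ (rows/columns indexed by slim vertices); $\lambda_{\min}(\mathfrak{H})$ is the smallest eigenvalue of $B(\mathfrak{H})$. A decomposition of $\mathfrak{H}$ is a family $\{\mathfrak{H}^i\}_{i=1}^n$ of induced Hoffman subgraphs such that: (i) $V(\mathfrak{H})=\bigcup_i V(\mathfrak{H}^i)$; (ii) $V^s(\mathfrak{H}^i)\cap V^s(\mathfrak{H}^j)=\emptyset$ for $i\ne j$; (iii) if $x\in V^s(\mathfrak{H}^i)$ and $y$ is a fat neighbour of $x$ in $\mathfrak{H}$, then $y\in V(\mathfrak{H}^i)$; (iv) if $x\in V^s(\mathfrak{H}^i)$, $y\in V^s(\mathfrak{H}^j)$, $i\neq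 j$, then $|N^f_{\mathfrak{H}}(x)\cap N^f_{\mathfrak{H}}(y)|\le 1$, with equality if and only if $x,y$ are adjacent. For a real $\alpha<0$, a Hoffman graph $\mathfrak{H}$ with $\lambda_{\min}(\mathfrak{H})\ge\alpha$ is $\alpha$-reducible if there exist a Hoffman graph $\mathfrak{H}'$ containing $\mathfrak{H}$ as an induced Hoffman subgraph and a decomposition $\{\mathfrak{H}^1,\mathfrak{H}^2\}$ of $\mathfrak{H}'$ with $\lambda_{\min}(\mathfrak{H}^i)\ge\alpha$ and $V^s(\mathfrak{H}^i)\cap V^s(\mathfrak{H})\ne\emptyset$ for $i=1,2$. *)

theory Defs
  imports Complex_Main
begin

record 'a hgraph =
  hV :: "'a set"
  hE :: "'a \<Rightarrow> 'a \<Rightarrow> bool"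
  hF :: "'a set"

definition slim :: "('a, 'b) hgraph_scheme \<Rightarrow> 'a set" where
  "slim H = hV H - hF H"

definition fat_nbrs :: "('a, 'b) hgraph_scheme \<Rightarrow> 'a \<Rightarrow> 'a set" where
  "fat_nbrs H x = {y \<in> hF H. hE H x y}"

definition hoffman_graph :: "'a hgraph \<Rightarrow> bool" where
  "hoffman_graph H \<longleftrightarrow>
     finite (hV H) \<and> hF H \<subseteq> hV H \<and>
     (\<forall>x y. hE H x y \<longrightarrow> x \<in> hV H \<and> y \<in> hV H) \<and>
     (\<forall>x y. hE H x y \<longrightarrow> hE H y x) \<and>
     (\<forall>x. \<not> hE H x x) \<and>
     (\<forall>f\<in>hF H. \<exists>s\<in>slim H. hE H f s) \<and>
     (\<forall>f\<in>hF H. \<forall>g\<in>hF H. \<not> hE H f g)"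

definition induced :: "'a hgraph \<Rightarrow> 'a set \<Rightarrow> 'a hgraph" where
  "induced H U = \<lparr>hV = U, hE = (\<lambda>x y. hE H x y \<and> x \<in> U \<and> y \<in> U), hF = hF H \<inter> U\<rparr>"

definition induced_sub :: "'a hgraph \<Rightarrow> 'a hgraph \<Rightarrow> bool" where
  "induced_sub K H \<longleftrightarrow> hoffman_graph K \<and> hV K \<subseteq> hV H \<and> K = induced H (hV K)"

text \<open>The matrix B(H) = A_s - C C^T, indexed by slim vertices.\<close>
definition Bmat :: "'a hgraph \<Rightarrow> 'a \<Rightarrow> 'a \<Rightarrow> real" where
  "Bmat H x y = (if hE H x y then 1 else 0) - real (card (fat_nbrs H x \<inter> fat_nbrs H y))"

definition is_eigenvalue :: "('a \<Rightarrow> 'a \<Rightarrow> real) \<Rightarrow> 'a set \<Rightarrow> real \<Rightarrow> bool" where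
  "is_eigenvalue M S \<mu> \<longleftrightarrow>
     (\<exists>v :: 'a \<Rightarrow> real. (\<exists>i\<in>S. v i \<noteq> 0) \<and> (\<forall>i\<in>S. (\<Sum>j\<in>S. M i j * v j) = \<mu> * v i))"

text \<open>Smallest eigenvalue of B(H) (B(H) is real symmetric, so all eigenvalues are real).\<close>
definition lambda_min :: "'a hgraph \<Rightarrow> real" where
  "lambda_min H = Min {\<mu>. is_eigenvalue (Bmat H) (slim H) \<mu>}"

definition decomposition :: "'a hgraph \<Rightarrow> 'i set \<Rightarrow> ('i \<Rightarrow> 'a hgraph) \<Rightarrow> bool" where
  "decomposition H I Hs \<longleftrightarrow>
     finite I \<and>
     (\<forall>i\<in>I. induced_sub (Hs i) H) \<and>
     hV H = (\<Union>i\<in>I. hV (Hs i)) \<and>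
     (\<forall>i\<in>I. \<forall>j\<in>I. i \<noteq> j \<longrightarrow> slim (Hs i) \<inter> slim (Hs j) = {}) \<and>
     (\<forall>i\<in>I. \<forall>x\<in>slim (Hs i). fat_nbrs H x \<subseteq> hV (Hs i)) \<and>
     (\<forall>i\<in>I. \<forall>j\<in>I. i \<noteq> j \<longrightarrow> (\<forall>x\<in>slim (Hs i). \<forall>y\<in>slim (Hs j).
         card (fat_nbrs H x \<inter> fat_nbrs H y) \<le> 1 \<and>
         (card (fat_nbrs H x \<inter> fat_nbrs H y) = 1 \<longleftrightarrow> hE H x y)))"

definition hmap :: "('a \<Rightarrow> 'b) \<Rightarrow> 'a hgraph \<Rightarrow> 'b hgraph" where
  "hmap f H = \<lparr>hV = f ` hV H, hE = (\<lambda>x y. \<exists>a b. x = f a \<and> y = f b \<and> hE H a b),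
               hF = f ` hF H\<rparr>"

text \<open>alpha-reducibility. The ambient graph H' lives on the vertex type 'a + nat, with H
  embedded via Inl (new vertices are taken from Inr).\<close>
definition reducible :: "real \<Rightarrow> 'a hgraph \<Rightarrow> bool" where
  "reducible \<alpha> H \<longleftrightarrow>
     lambda_min H \<ge> \<alpha> \<and>
     (\<exists>(H' :: ('a + nat) hgraph) (H1 :: ('a + nat) hgraph) H2.
        hoffman_graph H' \<and> induced_sub (hmap Inl H) H' \<and>
        decomposition H' {1::nat, 2} (\<lambda>i. if i = 1 then H1 else H2) \<and>
        lambda_min H1 \<ge> \<alpha> \<and> lambda_min H2 \<ge> \<alpha> \<and>
        slim H1 \<inter> slim (hmap Inl H) \<noteq> {} \<and> slim H2 \<inter> slim (hmap Inl H) \<noteq> {})"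

definition degree :: "'a hgraph \<Rightarrow> 'a \<Rightarrow> nat" where
  "degree H v = card {w \<in> hV H. hE H v w}"

definition max_degree :: "'a hgraph \<Rightarrow> nat" where
  "max_degree H = Max (degree H ` hV H)"

end

theory Submission imports Defs "Jordan_Normal_Form.Spectral_Radius" begin

(* The smallest eigenvalue of B(H) is bounded below by a Gershgorin-type
   row bound: if every row x of the symmetric matrix B(H) satisfies
   B(x,x) - sum_{y <> x} |B(x,y)| >= alpha, then lambda_min(H) >= alpha.  To know that
   lambda_min (a Min over the set of eigenvalues) is meaningful we transfer eigenvalues to
   the matrix library and show that a real symmetric matrix has finitely many and at least
   one real eigenvalue.  For the slim graph G itself the row bound gives -deg x >= -k.

   Pick a vertex v and attach, for every neighbour w of v, a new fat vertex
   f_w adjacent exactly to v and w.  The resulting Hoffman graph H' contains G as an induced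
   Hoffman subgraph and decomposes into H1 = {v} + fats and H2 = (V - {v}) + fats: the edge
   vw of G is now encoded by the common fat neighbour f_w.  Both parts again satisfy the
   row bound -deg x >= -k, which yields the theorem. *)

section \<open>Eigenvalues of real symmetric matrices\<close>

text \<open>A real symmetric matrix of positive dimension has a real eigenvalue: a complex
  eigenvalue exists, and the Rayleigh quotient argument shows it is real.\<close>
lemma symmetric_real_matrix_has_eigenvalue:
  fixes A :: "real mat"
  assumes A: "A \<in> carrier_mat n n" and n: "n > 0"
    and sym: "\<And>i j. i < n \<Longrightarrow> j < n \<Longrightarrow> A $$ (i, j) = A $$ (j, i)"
  shows "\<exists>r. eigenvalue A r"
proof -
  define Ac where "Ac = map_mat complex_of_real A"
  have Ac: "Ac \<in> carrier_mat n n" using A by (simp add: Ac_def)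
  from spectrum_non_empty[OF Ac n] obtain \<mu> where ev: "eigenvalue Ac \<mu>"
    by (auto simp: spectrum_def)
  then obtain v where v: "v \<in> carrier_vec n" "v \<noteq> 0\<^sub>v n" "Ac *\<^sub>v v = \<mu> \<cdot>\<^sub>v v"
    unfolding eigenvalue_def eigenvector_def using Ac by auto
  have row: "(\<Sum>j<n. of_real (A $$ (i, j)) * v $ j) = \<mu> * v $ i" if i: "i < n" for i
  proof -
    have "(Ac *\<^sub>v v) $ i = \<mu> * v $ i" using v(3) i v(1) by (metis carrier_vecD index_smult_vec(1))
    moreover have "(Ac *\<^sub>v v) $ i = (\<Sum>j<n. of_real (A $$ (i, j)) * v $ j)"
      using i Ac A v(1) by (auto simp: Ac_def scalar_prod_def lessThan_atLeast0 intro!: sum.cong)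
    ultimately show ?thesis by simp
  qed
  from v(1,2) obtain i0 where i0: "i0 < n" "v $ i0 \<noteq> 0" by force
  define t where "t = (\<Sum>i<n. (cmod (v $ i))\<^sup>2)"
  have "(cmod (v $ i0))\<^sup>2 \<le> t" unfolding t_def by (rule member_le_sum) (use i0 in auto)
  moreover have "(cmod (v $ i0))\<^sup>2 > 0" using i0 by simp
  ultimately have t_pos: "t > 0" by linarith
  \<comment> \<open>The quadratic form s = v* A v equals mu * |v|^2 and is its own conjugate.\<close>
  define s where "s = (\<Sum>i<n. \<Sum>j<n. cnj (v $ i) * of_real (A $$ (i, j)) * v $ j)"
  have "s = (\<Sum>i<n. cnj (v $ i) * (\<Sum>j<n. of_real (A $$ (i, j)) * v $ j))"
    unfolding s_def by (simp add: sum_distrib_left mult.assoc)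
  also have "\<dots> = (\<Sum>i<n. \<mu> * (v $ i * cnj (v $ i)))" by (rule sum.cong) (auto simp: row)
  also have "\<dots> = \<mu> * of_real t" unfolding t_def
    by (simp add: sum_distrib_left flip: complex_norm_square)
  finally have s_eq: "s = \<mu> * of_real t" .
  have "cnj s = (\<Sum>i<n. \<Sum>j<n. v $ i * of_real (A $$ (i, j)) * cnj (v $ j))"
    unfolding s_def by (simp add: cnj_sum)
  also have "\<dots> = (\<Sum>j<n. \<Sum>i<n. v $ i * of_real (A $$ (i, j)) * cnj (v $ j))" by (rule sum.swap)
  also have "\<dots> = s" unfolding s_def
    by (intro sum.cong refl) (auto simp: sym mult.commute mult.left_commute)
  finally have "cnj s = s" .
  with s_eq t_pos have "cnj \<mu> = \<mu>" by simp
  hence real: "\<mu> = of_real (Re \<mu>)" by (metis Reals_cnj_iff of_real_Re)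
  have "poly (char_poly Ac) \<mu> = 0" using ev eigenvalue_root_char_poly[OF Ac] by simp
  moreover have "char_poly Ac = map_poly of_real (char_poly A)"
    unfolding Ac_def using of_real_hom.char_poly_hom[OF A] by simp
  ultimately have "poly (map_poly of_real (char_poly A)) (of_real (Re \<mu>)) = (0::complex)"
    using real by simp
  hence "poly (char_poly A) (Re \<mu>) = 0" by (simp add: of_real_hom.poly_map_poly)
  thus ?thesis using eigenvalue_root_char_poly[OF A] by blast
qed

lemma sum_over_distinct_list:
  assumes "distinct xs"
  shows "(\<Sum>j<length xs. f (xs ! j)) = sum f (set xs)"
proof -
  have "set xs = (!) xs ` {..<length xs}" by (auto simp: in_set_conv_nth)
  thus ?thesis by (simp add: sum.reindex inj_on_nth assms)
qed

lemma is_eigenvalue_iff_eigenvalue: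
  fixes M :: "'a \<Rightarrow> 'a \<Rightarrow> real"
  assumes d: "distinct xs"
  defines "n \<equiv> length xs"
  defines "A \<equiv> mat n n (\<lambda>(i, j). M (xs ! i) (xs ! j))"
  shows "is_eigenvalue M (set xs) \<mu> \<longleftrightarrow> eigenvalue A \<mu>"
proof
  assume "is_eigenvalue M (set xs) \<mu>"
  then obtain v where v: "\<exists>i\<in>set xs. v i \<noteq> 0"
    "\<forall>i\<in>set xs. (\<Sum>j\<in>set xs. M i j * v j) = \<mu> * v i" unfolding is_eigenvalue_def by blast
  define w where "w = vec n (\<lambda>i. v (xs ! i))"
  from v(1) obtain k where k: "k < n" "v (xs ! k) \<noteq> 0"
    unfolding n_def by (auto simp: in_set_conv_nth)
  have "w \<noteq> 0\<^sub>v n" using k unfolding w_def by (metis index_vec index_zero_vec(1))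
  moreover have "A *\<^sub>v w = \<mu> \<cdot>\<^sub>v w"
  proof (rule eq_vecI)
    fix i assume "i < dim_vec (\<mu> \<cdot>\<^sub>v w)"
    hence i: "i < n" unfolding w_def by simp
    have "(A *\<^sub>v w) $ i = (\<Sum>j<n. M (xs ! i) (xs ! j) * v (xs ! j))"
      using i unfolding A_def w_def
      by (auto simp: scalar_prod_def lessThan_atLeast0 intro!: sum.cong)
    also have "\<dots> = (\<Sum>j\<in>set xs. M (xs ! i) j * v j)"
      unfolding n_def by (rule sum_over_distinct_list[OF d])
    also have "\<dots> = \<mu> * v (xs ! i)" using v(2) i unfolding n_def by auto
    finally show "(A *\<^sub>v w) $ i = (\<mu> \<cdot>\<^sub>v w) $ i" using i unfolding w_def by simp
  qed (simp add: A_def w_def)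
  ultimately show "eigenvalue A \<mu>" unfolding eigenvalue_def eigenvector_def
    by (intro exI[of _ w]) (simp add: A_def w_def)
next
  assume "eigenvalue A \<mu>"
  then obtain w where w: "w \<in> carrier_vec n" "w \<noteq> 0\<^sub>v n" "A *\<^sub>v w = \<mu> \<cdot>\<^sub>v w"
    unfolding eigenvalue_def eigenvector_def A_def by auto
  define v where "v a = w $ (the_inv_into {..<n} ((!) xs) a)" for a
  have inj: "inj_on ((!) xs) {..<n}" unfolding n_def by (rule inj_on_nth[OF d]) auto
  have v_nth: "v (xs ! k) = w $ k" if "k < n" for k
    unfolding v_def using the_inv_into_f_f[OF inj] that by simp
  from w(1,2) obtain k where k: "k < n" "w $ k \<noteq> 0" by force
  show "is_eigenvalue M (set xs) \<mu>" unfolding is_eigenvalue_def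
  proof (intro exI[of _ v] conjI ballI)
    show "\<exists>i\<in>set xs. v i \<noteq> 0" using k v_nth unfolding n_def by (metis nth_mem)
  next
    fix a assume "a \<in> set xs"
    then obtain i where i: "i < n" "a = xs ! i" unfolding n_def by (auto simp: in_set_conv_nth)
    have "(\<Sum>j\<in>set xs. M a j * v j) = (\<Sum>j<n. M (xs ! i) (xs ! j) * v (xs ! j))"
      unfolding n_def i(2) by (rule sum_over_distinct_list[OF d, symmetric])
    also have "\<dots> = (\<Sum>j<n. M (xs ! i) (xs ! j) * w $ j)" by (rule sum.cong) (auto simp: v_nth)
    also have "\<dots> = (A *\<^sub>v w) $ i"
      using i w(1) unfolding A_def
      by (auto simp: scalar_prod_def lessThan_atLeast0 intro!: sum.cong)
    also have "\<dots> = \<mu> * w $ i" using w(1,3) i by (metis carrier_vecD index_smult_vec(1))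
    finally show "(\<Sum>j\<in>set xs. M a j * v j) = \<mu> * v a" using v_nth i by simp
  qed
qed

lemma symmetric_eigenvalues_finite_nonempty:
  fixes M :: "'a \<Rightarrow> 'a \<Rightarrow> real"
  assumes fin: "finite S" and ne: "S \<noteq> {}" and sym: "\<forall>i\<in>S. \<forall>j\<in>S. M i j = M j i"
  shows "finite {\<mu>. is_eigenvalue M S \<mu>}" and "{\<mu>. is_eigenvalue M S \<mu>} \<noteq> {}"
proof -
  obtain xs where xs: "set xs = S" "distinct xs" using finite_distinct_list[OF fin] by blast
  define n where "n = length xs"
  define A where "A = mat n n (\<lambda>(i, j). M (xs ! i) (xs ! j))"
  have A: "A \<in> carrier_mat n n" unfolding A_def by simp
  have spec: "{\<mu>. is_eigenvalue M S \<mu>} = spectrum A"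
    unfolding spectrum_def A_def n_def using is_eigenvalue_iff_eigenvalue[OF xs(2)] xs(1) by auto
  have "n > 0" using ne xs(1) unfolding n_def by auto
  then have "\<exists>r. eigenvalue A r"
    by (rule symmetric_real_matrix_has_eigenvalue[OF A])
      (use sym xs(1) in \<open>auto simp: A_def n_def\<close>)
  then show "{\<mu>. is_eigenvalue M S \<mu>} \<noteq> {}" unfolding spec by (auto simp: spectrum_def)
  show "finite {\<mu>. is_eigenvalue M S \<mu>}" unfolding spec by (rule card_finite_spectrum(1)[OF A])
qed

lemma eigenvalue_ge_gershgorin:
  fixes M :: "'a \<Rightarrow> 'a \<Rightarrow> real"
  assumes fin: "finite S" and ev: "is_eigenvalue M S \<mu>"
    and bound: "\<forall>i\<in>S. \<alpha> \<le> M i i - (\<Sum>j\<in>S - {i}. \<bar>M i j\<bar>)"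
  shows "\<alpha> \<le> \<mu>"
proof -
  obtain v where v: "\<exists>i\<in>S. v i \<noteq> 0" "\<forall>i\<in>S. (\<Sum>j\<in>S. M i j * v j) = \<mu> * v i"
    using ev unfolding is_eigenvalue_def by blast
  \<comment> \<open>Look at the row where the eigenvector has its largest absolute entry.\<close>
  obtain i where i: "i \<in> S" "\<forall>j\<in>S. \<bar>v j\<bar> \<le> \<bar>v i\<bar>"
  proof -
    have "S \<noteq> {}" using v(1) by auto
    then have "Max ((\<lambda>j. \<bar>v j\<bar>) ` S) \<in> (\<lambda>j. \<bar>v j\<bar>) ` S" using fin by (intro Max_in) auto
    then obtain i where "i \<in> S" "\<bar>v i\<bar> = Max ((\<lambda>j. \<bar>v j\<bar>) ` S)" by auto
    thus ?thesis using that fin by (metis Max_ge finite_imageI image_eqI)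
  qed
  have vi: "\<bar>v i\<bar> > 0" using v(1) i(2) by force
  have "\<mu> * v i = M i i * v i + (\<Sum>j\<in>S - {i}. M i j * v j)"
    using v(2) i(1) sum.remove[OF fin i(1), of "\<lambda>j. M i j * v j"] by simp
  hence "(\<mu> - M i i) * v i = (\<Sum>j\<in>S - {i}. M i j * v j)" by (simp add: algebra_simps)
  hence "\<bar>\<mu> - M i i\<bar> * \<bar>v i\<bar> = \<bar>\<Sum>j\<in>S - {i}. M i j * v j\<bar>" by (metis abs_mult)
  also have "\<dots> \<le> (\<Sum>j\<in>S - {i}. \<bar>M i j\<bar> * \<bar>v j\<bar>)"
    by (rule order_trans[OF sum_abs]) (simp add: abs_mult)
  also have "\<dots> \<le> (\<Sum>j\<in>S - {i}. \<bar>M i j\<bar> * \<bar>v i\<bar>)"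
    by (rule sum_mono) (use i(2) in \<open>auto intro: mult_left_mono\<close>)
  also have "\<dots> = (\<Sum>j\<in>S - {i}. \<bar>M i j\<bar>) * \<bar>v i\<bar>" by (simp add: sum_distrib_right)
  finally have "\<bar>\<mu> - M i i\<bar> \<le> (\<Sum>j\<in>S - {i}. \<bar>M i j\<bar>)" using vi by simp
  thus ?thesis using bound i(1) by force
qed

section \<open>Hoffman graphs: induced subgraphs and the row bound\<close>

lemma induced_simps [simp]:
  "hV (induced H U) = U"
  "hE (induced H U) x y \<longleftrightarrow> hE H x y \<and> x \<in> U \<and> y \<in> U"
  "hF (induced H U) = hF H \<inter> U"
  by (simp_all add: induced_def)

lemma slim_induced: "slim (induced H U) = U - hF H"
  by (auto simp: slim_def)

lemma fat_nbrs_induced: "x \<in> U \<Longrightarrow> hF H \<subseteq> U \<Longrightarrow> fat_nbrs (induced H U) x = fat_nbrs H x"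
  by (auto simp: fat_nbrs_def)

lemma Bmat_induced:
  "x \<in> U \<Longrightarrow> y \<in> U \<Longrightarrow> hF H \<subseteq> U \<Longrightarrow> Bmat (induced H U) x y = Bmat H x y"
  by (simp add: Bmat_def fat_nbrs_induced)

lemma induced_sub_induced:
  assumes H: "hoffman_graph H" and U: "U \<subseteq> hV H"
    and fat_nbr: "\<forall>f\<in>hF H \<inter> U. \<exists>s\<in>U - hF H. hE H f s"
  shows "induced_sub (induced H U) H"
proof -
  from H have "finite (hV H)" "\<forall>x y. hE H x y \<longrightarrow> hE H y x" "\<forall>x. \<not> hE H x x"
    "\<forall>f\<in>hF H. \<forall>g\<in>hF H. \<not> hE H f g" unfolding hoffman_graph_def by blast+
  moreover have "finite U" using \<open>finite (hV H)\<close> U finite_subset by blast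
  ultimately have "hoffman_graph (induced H U)"
    using fat_nbr unfolding hoffman_graph_def slim_induced induced_simps by blast
  then show ?thesis using U by (simp add: induced_sub_def)
qed

lemma Bmat_sym:
  assumes "hoffman_graph H"
  shows "Bmat H x y = Bmat H y x"
proof -
  have "hE H x y = hE H y x" using assms unfolding hoffman_graph_def by blast
  then show ?thesis unfolding Bmat_def by (simp add: Int_commute)
qed

lemma lambda_min_ge_row_bound:
  assumes H: "hoffman_graph H" and ne: "slim H \<noteq> {}"
    and bound: "\<forall>x\<in>slim H. \<alpha> \<le> Bmat H x x - (\<Sum>y\<in>slim H - {x}. \<bar>Bmat H x y\<bar>)"
  shows "\<alpha> \<le> lambda_min H"
proof -
  have fin: "finite (slim H)" using H unfolding hoffman_graph_def slim_def by simp
  have sym: "\<forall>x\<in>slim H. \<forall>y\<in>slim H. Bmat H x y = Bmat H y x" using Bmat_sym[OF H] by blast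
  note eig = symmetric_eigenvalues_finite_nonempty[OF fin ne sym]
  show ?thesis unfolding lambda_min_def
    using Min_in[OF eig] eigenvalue_ge_gershgorin[OF fin _ bound] by blast
qed

lemma degree_le_max_degree: "finite (hV G) \<Longrightarrow> a \<in> hV G \<Longrightarrow> Defs.degree G a \<le> max_degree G"
  unfolding max_degree_def by simp

text \<open>In an ordinary graph, B is the adjacency matrix, whose absolute row sums are the
  degrees; so lambda_min(G) is at least minus the maximum degree.\<close>
lemma slim_lambda_min_ge:
  assumes G: "hoffman_graph G" and no_fat: "hF G = {}" and ne: "hV G \<noteq> {}"
  shows "- real (max_degree G) \<le> lambda_min G"
proof (rule lambda_min_ge_row_bound[OF G])
  have fin: "finite (hV G)" and irrefl: "\<And>x. \<not> hE G x x"
    using G unfolding hoffman_graph_def by auto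
  have B: "Bmat G x y = of_bool (hE G x y)" for x y by (simp add: Bmat_def fat_nbrs_def no_fat)
  show "slim G \<noteq> {}" using ne no_fat by (simp add: slim_def)
  show "\<forall>x\<in>slim G. - real (max_degree G) \<le> Bmat G x x - (\<Sum>y\<in>slim G - {x}. \<bar>Bmat G x y\<bar>)"
  proof
    fix x assume x: "x \<in> slim G"
    have "(\<Sum>y\<in>slim G - {x}. \<bar>Bmat G x y\<bar>) = real (card ((hV G - {x}) \<inter> {y. hE G x y}))"
      using fin by (simp add: B no_fat slim_def)
    also have "(hV G - {x}) \<inter> {y. hE G x y} = {y \<in> hV G. hE G x y}" using irrefl by auto
    finally show "- real (max_degree G) \<le> Bmat G x x - (\<Sum>y\<in>slim G - {x}. \<bar>Bmat G x y\<bar>)"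
      using degree_le_max_degree[OF fin, of x] x irrefl
      by (simp add: B no_fat slim_def Defs.degree_def)
  qed
qed

section \<open>Splitting off a vertex by fat vertices\<close>

locale vertex_split =
  fixes G :: "'a hgraph" and v :: 'a and g :: "'a \<Rightarrow> nat"
  assumes hoffman: "hoffman_graph G" and no_fat: "hF G = {}" and v_in: "v \<in> hV G"
    and g_inj: "inj_on g {w \<in> hV G. hE G v w}"
begin

definition nbrs :: "'a set" where
  "nbrs = {w \<in> hV G. hE G v w}"

definition fat :: "'a \<Rightarrow> 'a + nat" where
  "fat w = Inr (g w)"

definition fats :: "('a + nat) set" where
  "fats = fat ` nbrs"

definition ext_edge :: "'a + nat \<Rightarrow> 'a + nat \<Rightarrow> bool" where
  "ext_edge x y \<longleftrightarrow> (\<exists>a b. x = Inl a \<and> y = Inl b \<and> hE G a b) \<or>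
     (\<exists>w\<in>nbrs. (x = fat w \<and> (y = Inl v \<or> y = Inl w)) \<or> (y = fat w \<and> (x = Inl v \<or> x = Inl w)))"

definition ext :: "('a + nat) hgraph" where
  "ext = \<lparr>hV = Inl ` hV G \<union> fats, hE = ext_edge, hF = fats\<rparr>"

definition part1 :: "('a + nat) hgraph" where
  "part1 = induced ext (insert (Inl v) fats)"

definition part2 :: "('a + nat) hgraph" where
  "part2 = induced ext (Inl ` (hV G - {v}) \<union> fats)"

lemma finite_V: "finite (hV G)"
  and edge_in_V: "hE G a b \<Longrightarrow> a \<in> hV G \<and> b \<in> hV G"
  and edge_sym: "hE G a b \<Longrightarrow> hE G b a"
  and edge_irrefl: "\<not> hE G a a"
  using hoffman unfolding hoffman_graph_def by auto

lemma ext_simps [simp]: "hV ext = Inl ` hV G \<union> fats" "hE ext = ext_edge" "hF ext = fats"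
  by (simp_all add: ext_def)

lemma fat_eq_iff: "w \<in> nbrs \<Longrightarrow> u \<in> nbrs \<Longrightarrow> fat w = fat u \<longleftrightarrow> w = u"
  using g_inj unfolding fat_def nbrs_def by (auto dest: inj_onD)

lemma fat_ne_Inl [simp]: "fat w \<noteq> Inl a" "Inl a \<noteq> fat w" "Inl a \<notin> fats"
  by (auto simp: fat_def fats_def)

lemma ext_edge_Inl_Inl [simp]: "ext_edge (Inl a) (Inl b) \<longleftrightarrow> hE G a b"
  by (auto simp: ext_edge_def)

lemma ext_edge_Inl_fat: "u \<in> nbrs \<Longrightarrow> ext_edge (Inl a) (fat u) \<longleftrightarrow> a = v \<or> a = u"
  and ext_edge_fat_Inl: "u \<in> nbrs \<Longrightarrow> ext_edge (fat u) (Inl a) \<longleftrightarrow> a = v \<or> a = u"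
  using fat_eq_iff by (auto simp: ext_edge_def)

lemma fat_nbr_of_fat: "f \<in> fats \<Longrightarrow> \<exists>u\<in>nbrs. f = fat u \<and> ext_edge f (Inl v) \<and> ext_edge f (Inl u)"
  using ext_edge_fat_Inl by (auto simp: fats_def)

lemma hoffman_ext: "hoffman_graph ext"
  unfolding hoffman_graph_def ext_simps
proof (intro conjI)
  show "finite (Inl ` hV G \<union> fats)" using finite_V by (simp add: fats_def nbrs_def)
  show "\<forall>x y. ext_edge x y \<longrightarrow> x \<in> Inl ` hV G \<union> fats \<and> y \<in> Inl ` hV G \<union> fats"
    unfolding ext_edge_def fats_def nbrs_def using edge_in_V v_in by blast
  show "\<forall>x y. ext_edge x y \<longrightarrow> ext_edge y x" unfolding ext_edge_def using edge_sym by blast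
  show "\<forall>x. \<not> ext_edge x x" unfolding ext_edge_def using edge_irrefl by auto
  show "\<forall>f\<in>fats. \<exists>s\<in>slim ext. ext_edge f s"
    using fat_nbr_of_fat v_in by (fastforce simp: slim_def)
  show "\<forall>f\<in>fats. \<forall>g\<in>fats. \<not> ext_edge f g" by (auto simp: ext_edge_def fats_def fat_def)
qed auto

lemma G_induced_sub_ext: "induced_sub (hmap Inl G) ext"
proof -
  have "hmap Inl G = induced ext (Inl ` hV G)"
    unfolding hmap_def induced_def using edge_in_V no_fat by (auto intro!: ext)
  moreover have "induced_sub (induced ext (Inl ` hV G)) ext"
    by (rule induced_sub_induced[OF hoffman_ext]) auto
  ultimately show ?thesis by simp
qed

lemma slim_G: "slim (hmap Inl G) = Inl ` hV G"
  by (simp add: slim_def hmap_def no_fat)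

lemma slim_part1: "slim part1 = {Inl v}"
  by (auto simp: part1_def slim_induced)

lemma slim_part2: "slim part2 = Inl ` (hV G - {v})"
  by (auto simp: part2_def slim_induced)

lemma fat_nbrs_v: "fat_nbrs ext (Inl v) = fats"
  using ext_edge_Inl_fat by (auto simp: fat_nbrs_def fats_def)

lemma fat_nbrs_other:
  "a \<noteq> v \<Longrightarrow> fat_nbrs ext (Inl a) = (if a \<in> nbrs then {fat a} else {})"
  using ext_edge_Inl_fat fat_eq_iff by (auto simp: fat_nbrs_def fats_def)

text \<open>The edge va of G is encoded by a common fat neighbour of v and a.\<close>
lemma common_fat_nbrs_v:
  assumes "a \<in> hV G" "a \<noteq> v"
  shows "card (fat_nbrs ext (Inl v) \<inter> fat_nbrs ext (Inl a)) = of_bool (hE G v a)"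
  using assms fat_nbrs_other[of a] by (auto simp: fat_nbrs_v fats_def nbrs_def)

lemma induced_sub_part1: "induced_sub part1 ext"
  unfolding part1_def
proof (rule induced_sub_induced[OF hoffman_ext])
  show "\<forall>f\<in>hF ext \<inter> insert (Inl v) fats. \<exists>s\<in>insert (Inl v) fats - hF ext. hE ext f s"
    using fat_nbr_of_fat by fastforce
qed (use v_in in auto)

lemma induced_sub_part2: "induced_sub part2 ext"
  unfolding part2_def
proof (rule induced_sub_induced[OF hoffman_ext])
  show "\<forall>f\<in>hF ext \<inter> (Inl ` (hV G - {v}) \<union> fats).
      \<exists>s\<in>Inl ` (hV G - {v}) \<union> fats - hF ext. hE ext f s"
  proof
    fix f assume "f \<in> hF ext \<inter> (Inl ` (hV G - {v}) \<union> fats)"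
    then obtain u where "u \<in> nbrs" "ext_edge f (Inl u)" using fat_nbr_of_fat by auto
    moreover have "u \<in> hV G - {v}" if "u \<in> nbrs" using that edge_irrefl by (auto simp: nbrs_def)
    ultimately show "\<exists>s\<in>Inl ` (hV G - {v}) \<union> fats - hF ext. hE ext f s" by auto
  qed
qed auto

lemma decomposition_ext: "decomposition ext {1::nat, 2} (\<lambda>i. if i = 1 then part1 else part2)"
proof -
  have fat_nbrs_in: "fat_nbrs ext x \<subseteq> fats" for x by (auto simp: fat_nbrs_def)
  have cross: "card (fat_nbrs ext x \<inter> fat_nbrs ext y) \<le> 1 \<and>
      (card (fat_nbrs ext x \<inter> fat_nbrs ext y) = 1 \<longleftrightarrow> ext_edge x y)"
    if "x \<in> slim part1" "y \<in> slim part2" for x y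
  proof -
    from that(2) obtain a where a: "y = Inl a" "a \<in> hV G" "a \<noteq> v" by (auto simp: slim_part2)
    moreover have "x = Inl v" using that(1) by (simp add: slim_part1)
    ultimately show ?thesis using common_fat_nbrs_v[of a] by simp
  qed
  have cross': "card (fat_nbrs ext x \<inter> fat_nbrs ext y) \<le> 1 \<and>
      (card (fat_nbrs ext x \<inter> fat_nbrs ext y) = 1 \<longleftrightarrow> ext_edge x y)"
    if "x \<in> slim part2" "y \<in> slim part1" for x y
    using cross[OF that(2,1)] hoffman_ext unfolding hoffman_graph_def
    by (auto simp: Int_commute)
  show ?thesis unfolding decomposition_def
    using induced_sub_part1 induced_sub_part2 v_in fat_nbrs_in cross cross'
      slim_part1 slim_part2
    by (auto simp: part1_def part2_def)
qed

lemma lambda_min_part1: "- real (max_degree G) \<le> lambda_min part1"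
proof (rule lambda_min_ge_row_bound)
  show "hoffman_graph part1" using decomposition_ext unfolding decomposition_def induced_sub_def by auto
  have "Bmat part1 (Inl v) (Inl v) = Bmat ext (Inl v) (Inl v)"
    unfolding part1_def by (rule Bmat_induced) auto
  also have "\<dots> = - real (card nbrs)"
    using edge_irrefl fat_eq_iff by (simp add: Bmat_def fat_nbrs_v fats_def card_image inj_on_def)
  finally show "\<forall>x\<in>slim part1. - real (max_degree G) \<le> Bmat part1 x x - (\<Sum>y\<in>slim part1 - {x}. \<bar>Bmat part1 x y\<bar>)"
    using degree_le_max_degree[OF finite_V v_in] by (simp add: slim_part1 Defs.degree_def nbrs_def)
qed (simp add: slim_part1)

text \<open>On \<open>part2\<close>, B is the adjacency matrix minus 1 on the diagonal at the neighbours of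
  v; so every row still has (signed) row bound -deg a.\<close>
lemma Bmat_part2:
  assumes "a \<in> hV G - {v}" "b \<in> hV G - {v}"
  shows "Bmat part2 (Inl a) (Inl b) = of_bool (hE G a b) - of_bool (a = b \<and> a \<in> nbrs)"
proof -
  have "Bmat part2 (Inl a) (Inl b) = Bmat ext (Inl a) (Inl b)"
    unfolding part2_def by (rule Bmat_induced) (use assms in auto)
  then show ?thesis using assms fat_eq_iff
    by (auto simp: Bmat_def fat_nbrs_other)
qed

lemma lambda_min_part2:
  assumes two: "hV G - {v} \<noteq> {}"
  shows "- real (max_degree G) \<le> lambda_min part2"
proof (rule lambda_min_ge_row_bound)
  show "hoffman_graph part2" using decomposition_ext unfolding decomposition_def induced_sub_def by auto
  show "slim part2 \<noteq> {}" using two by (simp add: slim_part2)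
  show "\<forall>x\<in>slim part2. - real (max_degree G) \<le> Bmat part2 x x - (\<Sum>y\<in>slim part2 - {x}. \<bar>Bmat part2 x y\<bar>)"
  proof
    fix x assume "x \<in> slim part2"
    then obtain a where a: "x = Inl a" "a \<in> hV G - {v}" by (auto simp: slim_part2)
    define D where "D = {b \<in> hV G. hE G a b}"
    have "slim part2 - {x} = Inl ` (hV G - {v} - {a})" using a by (auto simp: slim_part2)
    then have "(\<Sum>y\<in>slim part2 - {x}. \<bar>Bmat part2 x y\<bar>)
        = (\<Sum>b\<in>hV G - {v} - {a}. \<bar>Bmat part2 (Inl a) (Inl b)\<bar>)"
      using a by (simp add: sum.reindex)
    also have "\<dots> = (\<Sum>b\<in>hV G - {v} - {a}. of_bool (hE G a b))"
      by (rule sum.cong) (use a in \<open>auto simp: Bmat_part2\<close>)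
    also have "\<dots> = real (card ((hV G - {v} - {a}) \<inter> {b. hE G a b}))"
      using finite_V by simp
    also have "(hV G - {v} - {a}) \<inter> {b. hE G a b} = D - {v}"
      using edge_irrefl by (auto simp: D_def)
    also have "real (card (D - {v})) = real (card D) - of_bool (a \<in> nbrs)"
    proof -
      have fin: "finite D" using finite_V by (simp add: D_def)
      have "v \<in> D \<longleftrightarrow> a \<in> nbrs" using a v_in edge_sym by (auto simp: D_def nbrs_def)
      moreover have "v \<in> D \<Longrightarrow> card D \<ge> 1" using fin card_0_eq by fastforce
      ultimately show ?thesis by (simp add: card_Diff_singleton_if of_nat_diff)
    qed
    finally show "- real (max_degree G) \<le> Bmat part2 x x - (\<Sum>y\<in>slim part2 - {x}. \<bar>Bmat part2 x y\<bar>)"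
      using a degree_le_max_degree[OF finite_V, of a] edge_irrefl
      by (simp add: Bmat_part2 D_def Defs.degree_def)
  qed
qed

end

theorem mainTheorem1:
  fixes G :: "'a hgraph" and k :: nat
  assumes "hoffman_graph G"
    and "hF G = {}"
    and "card (hV G) \<ge> 2"
    and "k = max_degree G"
  shows "reducible (- real k) G"
proof -
  have fin: "finite (hV G)" using assms(1) by (simp add: hoffman_graph_def)
  obtain v where v: "v \<in> hV G" using assms(3) by fastforce
  have rest: "hV G - {v} \<noteq> {}"
  proof
    assume "hV G - {v} = {}"
    then have "card (hV G) \<le> card {v}" by (intro card_mono) auto
    with assms(3) show False by simp
  qed
  obtain g :: "'a \<Rightarrow> nat" where g: "inj_on g {w \<in> hV G. hE G v w}"
    using finite_imp_inj_to_nat_seg[of "{w \<in> hV G. hE G v w}"] fin by auto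
  interpret vertex_split G v g using assms(1,2) v g by unfold_locales
  show ?thesis unfolding reducible_def assms(4)
  proof (intro conjI exI)
    show "- real (max_degree G) \<le> lambda_min G"
      using slim_lambda_min_ge assms(1,2) v by blast
    show "hoffman_graph ext" by (rule hoffman_ext)
    show "induced_sub (hmap Inl G) ext" by (rule G_induced_sub_ext)
    show "decomposition ext {1::nat, 2} (\<lambda>i. if i = 1 then part1 else part2)"
      by (rule decomposition_ext)
    show "- real (max_degree G) \<le> lambda_min part1" by (rule lambda_min_part1)
    show "- real (max_degree G) \<le> lambda_min part2" by (rule lambda_min_part2[OF rest])
    show "slim part1 \<inter> slim (hmap Inl G) \<noteq> {}" using v by (simp add: slim_part1 slim_G)
    show "slim part2 \<inter> slim (hmap Inl G) \<noteq> {}" using rest by (auto simp: slim_part2 slim_G)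
  qed
qed

end
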